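(* The graph $(C_3\cup P_2)+C_3$ is 1-planar.
   Context: A graph is 1-planar if it has a drawing in the plane in which each edge is crossed at most once. The join $G+H$ is obtained from vertex-disjoint copies of $G$ and $H$ by adding all edges between $V(G)$ and $V(H)$. $C_3$ is the triangle, $P_2$ is a single edge, $\cup$ is disjoint union. *)

theory Defs
  imports "HOL-Analysis.Analysis"
begin

text \<open>A (finite simple) graph is a pair (V, E) of a vertex set and a set of
  edges, each edge being a 2-element subset of V.\<close>

type_synonym 'v graph = "'v set \<times> 'v set set"

definition C3 :: "nat graph" where
  "C3 = ({0,1,2}, {{0,1},{1,2},{0,2}})"

definition P2 :: "nat graph" where
  "P2 = ({0,1}, {{0,1}})"

definition disj_union :: "'a graph \<Rightarrow> 'b graph \<Rightarrow> ('a + 'b) graph" where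
  "disj_union G H = (Inl ` fst G \<union> Inr ` fst H,
                     (\<lambda>e. Inl ` e) ` snd G \<union> (\<lambda>e. Inr ` e) ` snd H)"

definition join :: "'a graph \<Rightarrow> 'b graph \<Rightarrow> ('a + 'b) graph" where
  "join G H = (Inl ` fst G \<union> Inr ` fst H,
               (\<lambda>e. Inl ` e) ` snd G \<union> (\<lambda>e. Inr ` e) ` snd H
               \<union> {{Inl u, Inr v} | u v. u \<in> fst G \<and> v \<in> fst H})"

definition drawing :: "'v graph \<Rightarrow> ('v \<Rightarrow> complex) \<Rightarrow> ('v set \<Rightarrow> real \<Rightarrow> complex) \<Rightarrow> bool" where
  "drawing G p c \<longleftrightarrow>
     inj_on p (fst G) \<and>
     (\<forall>e\<in>snd G. \<exists>u v. e = {u, v} \<and> u \<noteq> v \<and> u \<in> fst G \<and> v \<in> fst G \<and>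
        arc (c e) \<and> pathstart (c e) = p u \<and> pathfinish (c e) = p v \<and>
        path_image (c e) \<inter> p ` fst G = {p u, p v})"

definition crossings :: "'v graph \<Rightarrow> ('v \<Rightarrow> complex) \<Rightarrow> ('v set \<Rightarrow> real \<Rightarrow> complex)
                         \<Rightarrow> 'v set \<Rightarrow> ('v set \<times> complex) set" where
  "crossings G p c e = {(f, z). f \<in> snd G \<and> f \<noteq> e \<and>
      z \<in> path_image (c e) \<inter> path_image (c f) - p ` fst G}"

definition one_planar :: "'v graph \<Rightarrow> bool" where
  "one_planar G \<longleftrightarrow> (\<exists>p c. drawing G p c \<and>
      (\<forall>e\<in>snd G. \<forall>x\<in>crossings G p c e. \<forall>y\<in>crossings G p c e. x = y))"

end

theory Submission
  imports Defs
begin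

text \<open>We give a straight-line drawing with integer coordinates. Two segments meet at most in
  endpoints if the endpoints of one lie strictly on one side of the line through the other, or if
  they share an endpoint and are not parallel; both conditions are decided exactly by integer
  orientation determinants. For every edge, all other edges but at most one pass this test, and
  the remaining one is not parallel to it, so it crosses the edge in at most one point.\<close>

text \<open>The determinant \<open>Re w * Im z - Im w * Re z\<close> of \<open>w\<close> and \<open>z\<close> as vectors of the plane.\<close>

definition cross :: "complex \<Rightarrow> complex \<Rightarrow> real" where
  "cross w z = Im (cnj w * z)"

definition orient :: "complex \<Rightarrow> complex \<Rightarrow> complex \<Rightarrow> real" where
  "orient a b z = cross (b - a) (z - a)"

lemma cross_self [simp]: "cross w w = 0"
  by (simp add: cross_def)

lemma orient_eq_0_at_ends [simp]: "orient a b a = 0" "orient a b b = 0"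
  by (simp_all add: orient_def cross_def)

lemma orient_diff: "orient c d b - orient c d a = - cross (b - a) (d - c)"
  by (simp add: orient_def cross_def algebra_simps)

lemma orient_convex_combination:
  "orient a b ((1 - t) *\<^sub>R c + t *\<^sub>R d) = (1 - t) * orient a b c + t * orient a b d"
  by (simp add: orient_def cross_def algebra_simps)

lemma orient_closed_segment_eq_0:
  assumes "z \<in> closed_segment a b"
  shows "orient a b z = 0"
proof -
  obtain t where "z = (1 - t) *\<^sub>R a + t *\<^sub>R b"
    using assms by (auto simp: in_segment)
  then show ?thesis
    by (simp add: orient_convex_combination)
qed

lemma closed_segment_Int_eq_empty_if_same_side:
  assumes "0 < orient a b c * orient a b d"
  shows "closed_segment a b \<inter> closed_segment c d = {}"
proof (rule equals0I)
  fix z assume z: "z \<in> closed_segment a b \<inter> closed_segment c d"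
  then obtain t where t: "0 \<le> t" "t \<le> 1" "z = (1 - t) *\<^sub>R c + t *\<^sub>R d"
    by (auto simp: in_segment)
  let ?c = "orient a b c" and ?d = "orient a b d"
  have "0 < ?c * ((1 - t) * ?c + t * ?d)"
  proof (cases "t = 0")
    case False
    have "0 \<le> (1 - t) * ?c\<^sup>2" using t by simp
    moreover have "0 < t * (?c * ?d)" using False t assms by simp
    ultimately show ?thesis by (simp add: algebra_simps power2_eq_square)
  qed (use assms in \<open>auto simp: zero_less_mult_iff\<close>)
  moreover have "orient a b z = 0" using z orient_closed_segment_eq_0 by blast
  ultimately show False by (simp add: t(3) orient_convex_combination)
qed

lemma closed_segment_Int_subsingleton:
  assumes "cross (b - a) (d - c) \<noteq> 0"
    and "z1 \<in> closed_segment a b \<inter> closed_segment c d"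
    and "z2 \<in> closed_segment a b \<inter> closed_segment c d"
  shows "z1 = z2"
proof -
  obtain t1 where t1: "z1 = (1 - t1) *\<^sub>R a + t1 *\<^sub>R b"
    using assms(2) by (auto simp: in_segment)
  obtain t2 where t2: "z2 = (1 - t2) *\<^sub>R a + t2 *\<^sub>R b"
    using assms(3) by (auto simp: in_segment)
  have "orient c d z1 = 0" "orient c d z2 = 0"
    using assms(2,3) orient_closed_segment_eq_0 by blast+
  then have "(1 - t1) * orient c d a + t1 * orient c d b = 0"
    "(1 - t2) * orient c d a + t2 * orient c d b = 0"
    by (simp_all only: t1 t2 orient_convex_combination)
  then have "(t1 - t2) * (orient c d b - orient c d a) = 0"
    by (simp add: algebra_simps)
  with assms(1) show ?thesis by (simp add: t1 t2 orient_diff)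
qed

lemma closed_segment_Int_eq_shared_endpoint:
  assumes "cross (b - a) (d - c) \<noteq> 0" and "s \<in> {a, b} \<inter> {c, d}"
  shows "closed_segment a b \<inter> closed_segment c d = {s}"
  using assms closed_segment_Int_subsingleton[OF assms(1)] by auto

definition lattice_point :: "int \<times> int \<Rightarrow> complex" where
  "lattice_point a = Complex (of_int (fst a)) (of_int (snd a))"

definition det_int :: "int \<times> int \<Rightarrow> int \<times> int \<Rightarrow> int" where
  "det_int a b = fst a * snd b - snd a * fst b"

lemma lattice_point_diff: "lattice_point (a - b) = lattice_point a - lattice_point b"
  by (simp add: lattice_point_def complex_eq_iff)

lemma inj_lattice_point: "inj lattice_point"
  by (rule injI) (simp add: lattice_point_def complex_eq_iff prod_eq_iff)

lemma cross_lattice_point: "cross (lattice_point a) (lattice_point b) = of_int (det_int a b)"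
  by (simp add: cross_def det_int_def lattice_point_def)

lemma orient_lattice_point:
  "orient (lattice_point a) (lattice_point b) (lattice_point c) = of_int (det_int (b - a) (c - a))"
  by (simp add: orient_def lattice_point_diff[symmetric] cross_lattice_point)

lemma lattice_point_notin_closed_segment:
  assumes "det_int (b - a) (c - a) \<noteq> 0"
  shows "lattice_point c \<notin> closed_segment (lattice_point a) (lattice_point b)"
  using assms orient_closed_segment_eq_0 by (force simp: orient_lattice_point)

text \<open>A sufficient criterion only: overlapping collinear segments never satisfy it.\<close>

definition touch_only_at_ends :: "int \<times> int \<Rightarrow> int \<times> int \<Rightarrow> int \<times> int \<Rightarrow> int \<times> int \<Rightarrow> bool" where
  "touch_only_at_ends a b c d \<longleftrightarrow>
     0 < det_int (b - a) (c - a) * det_int (b - a) (d - a) \<or>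
     0 < det_int (d - c) (a - c) * det_int (d - c) (b - c) \<or>
     ({a, b} \<inter> {c, d} \<noteq> {} \<and> det_int (b - a) (d - c) \<noteq> 0)"

lemma closed_segment_Int_subset_if_touch_only_at_ends:
  assumes "touch_only_at_ends a b c d"
  shows "closed_segment (lattice_point a) (lattice_point b) \<inter> closed_segment (lattice_point c) (lattice_point d)
           \<subseteq> lattice_point ` {a, b, c, d}"
  using assms unfolding touch_only_at_ends_def
proof (elim disjE conjE)
  assume "0 < det_int (b - a) (c - a) * det_int (b - a) (d - a)"
  then show ?thesis
    by (simp add: closed_segment_Int_eq_empty_if_same_side orient_lattice_point flip: of_int_mult)
next
  assume "0 < det_int (d - c) (a - c) * det_int (d - c) (b - c)"
  then have "closed_segment (lattice_point c) (lattice_point d) \<inter> closed_segment (lattice_point a) (lattice_point b) = {}"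
    by (simp add: closed_segment_Int_eq_empty_if_same_side orient_lattice_point flip: of_int_mult)
  then show ?thesis by blast
next
  assume "{a, b} \<inter> {c, d} \<noteq> {}" and "det_int (b - a) (d - c) \<noteq> 0"
  then obtain s where "s \<in> {a, b} \<inter> {c, d}" by blast
  then have "lattice_point s \<in> {lattice_point a, lattice_point b} \<inter> {lattice_point c, lattice_point d}"
    by auto
  with \<open>det_int (b - a) (d - c) \<noteq> 0\<close> show ?thesis
    by (subst closed_segment_Int_eq_shared_endpoint)
       (auto simp: cross_lattice_point lattice_point_diff[symmetric])
qed

definition edge_ends :: "'v set \<Rightarrow> 'v \<times> 'v" where
  "edge_ends e = (SOME (u, v). e = {u, v})"

lemma edge_ends_doubleton: "edge_ends {u, v} = (u, v) \<or> edge_ends {u, v} = (v, u)"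
proof -
  have "\<exists>uv. (\<lambda>(x, y). {u, v} = {x, y}) uv" by auto
  then have "(\<lambda>(x, y). {u, v} = {x, y}) (edge_ends {u, v})"
    unfolding edge_ends_def by (rule someI_ex)
  then show ?thesis by (auto simp: doubleton_eq_iff split: prod.splits)
qed

definition straight_line :: "('v \<Rightarrow> complex) \<Rightarrow> 'v set \<Rightarrow> real \<Rightarrow> complex" where
  "straight_line p e = linepath (p (fst (edge_ends e))) (p (snd (edge_ends e)))"

lemma path_image_straight_line:
  "path_image (straight_line p {u, v}) = closed_segment (p u) (p v)"
  using edge_ends_doubleton[of u v]
  by (auto simp: straight_line_def closed_segment_commute)

lemma drawing_straight_line:
  assumes inj: "inj_on p (fst G)"
    and edges: "\<forall>e\<in>snd G. \<exists>u v. e = {u, v} \<and> u \<noteq> v \<and> u \<in> fst G \<and> v \<in> fst G \<and>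
                  closed_segment (p u) (p v) \<inter> p ` fst G \<subseteq> {p u, p v}"
  shows "drawing G p (straight_line p)"
  unfolding drawing_def
proof (intro conjI ballI inj)
  fix e assume "e \<in> snd G"
  then obtain u v where uv: "e = {u, v}" "u \<noteq> v" "u \<in> fst G" "v \<in> fst G"
    and seg: "closed_segment (p u) (p v) \<inter> p ` fst G \<subseteq> {p u, p v}"
    using edges by blast
  define x y where "x = fst (edge_ends e)" and "y = snd (edge_ends e)"
  have xy: "{x, y} = {u, v}"
    using edge_ends_doubleton[of u v] by (auto simp: x_def y_def uv(1))
  then have x_y: "x \<noteq> y" "x \<in> fst G" "y \<in> fst G"
    using uv by (auto simp: doubleton_eq_iff)
  then have "p x \<noteq> p y"
    using inj by (auto dest: inj_onD)
  have line: "straight_line p e = linepath (p x) (p y)"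
    by (simp add: straight_line_def x_def y_def)
  have "closed_segment (p x) (p y) \<inter> p ` fst G = {p x, p y}"
    using seg x_y xy by (auto simp: doubleton_eq_iff closed_segment_commute)
  moreover have "e = {x, y}" using xy uv(1) by simp
  ultimately show "\<exists>x y. e = {x, y} \<and> x \<noteq> y \<and> x \<in> fst G \<and> y \<in> fst G \<and>
      arc (straight_line p e) \<and> pathstart (straight_line p e) = p x \<and>
      pathfinish (straight_line p e) = p y \<and>
      path_image (straight_line p e) \<inter> p ` fst G = {p x, p y}"
    unfolding line using \<open>p x \<noteq> p y\<close> x_y by (intro exI[of _ x] exI[of _ y]) simp
qed

definition crossing_candidates ::
    "('v \<Rightarrow> int \<times> int) \<Rightarrow> ('v \<times> 'v) list \<Rightarrow> 'v \<Rightarrow> 'v \<Rightarrow> ('v \<times> 'v) list" where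
  "crossing_candidates q es u v =
     [(x, y) \<leftarrow> es. (x, y) \<noteq> (u, v) \<and> \<not> touch_only_at_ends (q u) (q v) (q x) (q y)]"

lemma one_planar_if_lattice_drawing:
  fixes q :: "'v \<Rightarrow> int \<times> int"
  assumes vertices: "fst G = set vs"
    and edges: "snd G = (\<lambda>(u, v). {u, v}) ` set es"
    and distinct: "distinct (map q vs)"
    and segments: "\<forall>(u, v)\<in>set es. u \<noteq> v \<and> u \<in> set vs \<and> v \<in> set vs \<and>
                     (\<forall>w\<in>set vs. w = u \<or> w = v \<or> det_int (q v - q u) (q w - q u) \<noteq> 0)"
    and crossings: "\<forall>(u, v)\<in>set es. length (crossing_candidates q es u v) \<le> 1 \<and>
                     (\<forall>(x, y)\<in>set (crossing_candidates q es u v). det_int (q v - q u) (q y - q x) \<noteq> 0)"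
  shows "one_planar G"
proof -
  define p where "p = lattice_point \<circ> q"
  have "inj_on p (fst G)"
    using distinct inj_lattice_point
    by (simp add: p_def vertices distinct_map comp_inj_on inj_on_subset)
  moreover have edge_segment: "u \<noteq> v \<and> u \<in> fst G \<and> v \<in> fst G \<and>
      closed_segment (p u) (p v) \<inter> p ` fst G \<subseteq> {p u, p v}" if "(u, v) \<in> set es" for u v
    using segments that lattice_point_notin_closed_segment by (fastforce simp: p_def vertices)
  ultimately have drawing: "drawing G p (straight_line p)"
    by (intro drawing_straight_line) (auto simp: edges, blast)
  have candidate:
    "\<exists>x y. f = {x, y} \<and> (x, y) \<in> set (crossing_candidates q es u v) \<and>
       z \<in> closed_segment (p u) (p v) \<inter> closed_segment (p x) (p y)"
    if "(u, v) \<in> set es" and "(f, z) \<in> crossings G p (straight_line p) {u, v}" for u v f z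
  proof -
    from that(2) have f: "f \<in> snd G" "f \<noteq> {u, v}"
      and z_path: "z \<in> path_image (straight_line p {u, v}) \<inter> path_image (straight_line p f)"
      and z_vertex: "z \<notin> p ` set vs"
      by (auto simp: crossings_def vertices)
    from f(1) obtain x y where xy: "(x, y) \<in> set es" "f = {x, y}"
      by (auto simp: edges)
    have z: "z \<in> closed_segment (p u) (p v) \<inter> closed_segment (p x) (p y)"
      using z_path by (simp add: xy(2) path_image_straight_line)
    have "z \<in> p ` {u, v, x, y}" if "touch_only_at_ends (q u) (q v) (q x) (q y)"
      using closed_segment_Int_subset_if_touch_only_at_ends[OF that] z by (auto simp: p_def)
    moreover have "{u, v, x, y} \<subseteq> set vs"
      using segments \<open>(u, v) \<in> set es\<close> xy(1) by auto
    ultimately have "(x, y) \<in> set (crossing_candidates q es u v)"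
      using xy f(2) z_vertex by (auto simp: crossing_candidates_def)
    with xy z show ?thesis by blast
  qed
  have "x1 = x2" if "e \<in> snd G" "x1 \<in> crossings G p (straight_line p) e"
    "x2 \<in> crossings G p (straight_line p) e" for e x1 x2
  proof -
    from that(1) obtain u v where uv: "(u, v) \<in> set es" "e = {u, v}"
      by (auto simp: edges)
    obtain f1 z1 f2 z2 where "x1 = (f1, z1)" "x2 = (f2, z2)" by fastforce
    with candidate[OF uv(1)] that(2,3) uv(2) obtain a1 b1 a2 b2 where
      "f1 = {a1, b1}" "(a1, b1) \<in> set (crossing_candidates q es u v)"
      "z1 \<in> closed_segment (p u) (p v) \<inter> closed_segment (p a1) (p b1)"
      "f2 = {a2, b2}" "(a2, b2) \<in> set (crossing_candidates q es u v)"
      "z2 \<in> closed_segment (p u) (p v) \<inter> closed_segment (p a2) (p b2)"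
      by metis
    moreover have "(a1, b1) = (a2, b2)"
      using crossings uv(1) \<open>(a1, b1) \<in> _\<close> \<open>(a2, b2) \<in> _\<close>
      by (fastforce simp: le_Suc_eq length_Suc_conv)
    moreover have "cross (p v - p u) (p b1 - p a1) \<noteq> 0"
      using crossings uv(1) \<open>(a1, b1) \<in> _\<close>
      by (fastforce simp: p_def cross_lattice_point lattice_point_diff[symmetric])
    ultimately show ?thesis
      using closed_segment_Int_subsingleton \<open>x1 = _\<close> \<open>x2 = _\<close> by auto
  qed
  with drawing show ?thesis
    unfolding one_planar_def by blast
qed

definition vertex_list :: "((nat + nat) + nat) list" where
  "vertex_list = [Inl (Inl 0), Inl (Inl 1), Inl (Inl 2), Inl (Inr 0), Inl (Inr 1), Inr 0, Inr 1, Inr 2]"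

definition edge_list :: "(((nat + nat) + nat) \<times> ((nat + nat) + nat)) list" where
  "edge_list =
     [(Inl (Inl 0), Inl (Inl 1)), (Inl (Inl 1), Inl (Inl 2)), (Inl (Inl 0), Inl (Inl 2)),
      (Inl (Inr 0), Inl (Inr 1)), (Inr 0, Inr 1), (Inr 1, Inr 2), (Inr 0, Inr 2)]
     @ [(w, Inr i). w \<leftarrow> take 5 vertex_list, i \<leftarrow> [0, 1, 2]]"

definition position :: "(nat + nat) + nat \<Rightarrow> int \<times> int" where
  "position w = (case w of
       Inl (Inl i) \<Rightarrow> [(12, 7), (0, 0), (3, 8)] ! i
     | Inl (Inr i) \<Rightarrow> [(4, 6), (3, 4)] ! i
     | Inr i \<Rightarrow> [(7, 6), (1, 1), (4, 7)] ! i)"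

lemma vertices_join_C3_P2_C3: "fst (join (disj_union C3 P2) C3) = set vertex_list"
  by (auto simp: join_def disj_union_def C3_def P2_def vertex_list_def)

lemma edges_join_C3_P2_C3:
  "snd (join (disj_union C3 P2) C3) = (\<lambda>(u, v). {u, v}) ` set edge_list"
proof -
  have complete_bipartite: "{{Inl u, Inr v} |u v. u \<in> S \<and> v \<in> T} = (\<Union>u\<in>S. \<Union>v\<in>T. {{Inl u, Inr v}})"
    for S T by auto
  show ?thesis
    unfolding join_def disj_union_def C3_def P2_def fst_conv snd_conv complete_bipartite
    by (simp add: edge_list_def vertex_list_def insert_commute)
qed

theorem lemma13:
  shows "one_planar (join (disj_union C3 P2) C3)"
proof (rule one_planar_if_lattice_drawing)
  show "fst (join (disj_union C3 P2) C3) = set vertex_list"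
    by (rule vertices_join_C3_P2_C3)
  show "snd (join (disj_union C3 P2) C3) = (\<lambda>(u, v). {u, v}) ` set edge_list"
    by (rule edges_join_C3_P2_C3)
  show "distinct (map position vertex_list)"
    by (simp add: vertex_list_def position_def)
  show "\<forall>(u, v)\<in>set edge_list. u \<noteq> v \<and> u \<in> set vertex_list \<and> v \<in> set vertex_list \<and>
      (\<forall>w\<in>set vertex_list. w = u \<or> w = v \<or> det_int (position v - position u) (position w - position u) \<noteq> 0)"
    by (simp add: edge_list_def vertex_list_def position_def det_int_def)
  show "\<forall>(u, v)\<in>set edge_list. length (crossing_candidates position edge_list u v) \<le> 1 \<and>
      (\<forall>(x, y)\<in>set (crossing_candidates position edge_list u v).
         det_int (position v - position u) (position y - position x) \<noteq> 0)"
    unfolding crossing_candidates_def touch_only_at_ends_def det_int_def edge_list_def vertex_list_def position_def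
    by code_simp
qed

end
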